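(* Let $K\ge1$ and let $A_K,B_K,N_K$ be as defined in the context. Let $T_K=\{s\in S(\theta): \max N_K\le s<\max N_{K+1}\}$ and $T'_K=\{A_K+B_K\theta-s : s\in T_K\}$. Then $T'_K\subseteq S(\theta)$, and the set $C_K=T'_K\cup N_K\cup T_K$ is a block of consecutive terms of $S_\theta$ (i.e. $C_K=S(\theta)\cap[\min C_K,\max C_K]$) which is invariant under $s\mapsto A_K+B_K\theta-s$. In particular the sequence of consecutive differences of the elements of $C_K$ in increasing order is a palindrome.
   Context: Fix an irrational $\theta$ with $1<\theta<2$. Let $S(\theta)=\{i+j\theta : i,j\in\mathbb{N}_0\}$, and let $S_\theta$ be the sequence of its elements in increasing order. Every positive integer $K$ is either $K=\lfloor k\theta\rfloor+k$ or $K=\lfloor k/\theta\rfloor+k$ for a unique integer $k\ge1$ (and not both). In the first case set $(A_K,B_K)=(\lfloor k\theta\rfloor,k)$; in the second case set $(A_K,B_K)=(k,\lfloor k/\theta\rfloor)$. Define $N_K=\{s\in S(\theta): \min(A_K,B_K\theta)\le s\le \max(A_K,B_K\theta)\}$. *)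

theory Defs
  imports Complex_Main
begin

definition Sth :: "real \<Rightarrow> real set" where
  "Sth \<theta> = {real i + real j * \<theta> | i j :: nat. True}"

definition first_kind :: "real \<Rightarrow> nat \<Rightarrow> bool" where
  "first_kind \<theta> K = (\<exists>k::nat. k \<ge> 1 \<and> int K = \<lfloor>real k * \<theta>\<rfloor> + int k)"

definition k1 :: "real \<Rightarrow> nat \<Rightarrow> nat" where
  "k1 \<theta> K = (THE k::nat. k \<ge> 1 \<and> int K = \<lfloor>real k * \<theta>\<rfloor> + int k)"

definition k2 :: "real \<Rightarrow> nat \<Rightarrow> nat" where
  "k2 \<theta> K = (THE k::nat. k \<ge> 1 \<and> int K = \<lfloor>real k / \<theta>\<rfloor> + int k)"

definition A :: "real \<Rightarrow> nat \<Rightarrow> nat" where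
  "A \<theta> K = (if first_kind \<theta> K then nat \<lfloor>real (k1 \<theta> K) * \<theta>\<rfloor> else k2 \<theta> K)"

definition B :: "real \<Rightarrow> nat \<Rightarrow> nat" where
  "B \<theta> K = (if first_kind \<theta> K then k1 \<theta> K else nat \<lfloor>real (k2 \<theta> K) / \<theta>\<rfloor>)"

definition N :: "real \<Rightarrow> nat \<Rightarrow> real set" where
  "N \<theta> K = {s \<in> Sth \<theta>. min (real (A \<theta> K)) (real (B \<theta> K) * \<theta>) \<le> s
                       \<and> s \<le> max (real (A \<theta> K)) (real (B \<theta> K) * \<theta>)}"

definition T :: "real \<Rightarrow> nat \<Rightarrow> real set" where
  "T \<theta> K = {s \<in> Sth \<theta>. Max (N \<theta> K) \<le> s \<and> s < Max (N \<theta> (K + 1))}"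

definition T' :: "real \<Rightarrow> nat \<Rightarrow> real set" where
  "T' \<theta> K = (\<lambda>s. real (A \<theta> K) + real (B \<theta> K) * \<theta> - s) ` T \<theta> K"

definition C :: "real \<Rightarrow> nat \<Rightarrow> real set" where
  "C \<theta> K = T' \<theta> K \<union> N \<theta> K \<union> T \<theta> K"

definition diffs :: "real list \<Rightarrow> real list" where
  "diffs xs = map (\<lambda>i. xs ! (i + 1) - xs ! i) [0..<length xs - 1]"

end

theory Submission
  imports Defs
begin

text \<open>Call the positive integers \<open>n\<close> and the positive multiples \<open>m\<theta>\<close> axis points. For
  irrational \<open>\<theta>\<close> they interleave as the complementary Beatty sequences \<open>\<lfloor>k\<theta>\<rfloor> + k\<close> and
  \<open>\<lfloor>k/\<theta>\<rfloor> + k\<close>, so \<open>max N\<^sub>K = max(A\<^sub>K, B\<^sub>K\<theta>)\<close> is the \<open>K\<close>-th axis point, and \<open>A\<^sub>K\<close>, \<open>B\<^sub>K\<close> are the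
  largest \<open>n\<close>, \<open>m\<close> with \<open>n\<close>, \<open>m\<theta>\<close> not beyond it. If \<open>s = i + j\<theta> \<in> S(\<theta>)\<close> lies below the
  \<open>(K+1)\<close>-th axis point \<open>U\<close>, then so do \<open>i\<close> and \<open>j\<theta>\<close>, hence \<open>i \<le> A\<^sub>K\<close>, \<open>j \<le> B\<^sub>K\<close> and the
  reflection \<open>s \<mapsto> A\<^sub>K + B\<^sub>K\<theta> - s\<close> maps \<open>S(\<theta>) \<inter> (A\<^sub>K + B\<^sub>K\<theta> - U, U)\<close> onto itself. This set
  is exactly \<open>C\<^sub>K\<close>; being an interval of \<open>S(\<theta>)\<close> symmetric about its centre, its gaps read
  the same in both directions.\<close>

lemma mem_Sth_iff: "x \<in> Sth \<theta> \<longleftrightarrow> (\<exists>i j::nat. x = real i + real j * \<theta>)"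
  by (auto simp: Sth_def)

lemma finite_Sth_Int_atMost:
  assumes "\<theta> > 1" shows "finite (Sth \<theta> \<inter> {..M})"
proof -
  let ?n = "nat \<lceil>M\<rceil>"
  have "Sth \<theta> \<inter> {..M} \<subseteq> (\<lambda>(i, j). real i + real j * \<theta>) ` ({..?n} \<times> {..?n})"
  proof
    fix x assume "x \<in> Sth \<theta> \<inter> {..M}"
    then obtain i j :: nat where x: "x = real i + real j * \<theta>" and "x \<le> M"
      by (auto simp: Sth_def)
    moreover have "real j \<le> real j * \<theta>" using assms by (simp add: mult_le_cancel_left1)
    moreover have "M \<le> real ?n" by (rule real_nat_ceiling_ge)
    moreover have "real i \<ge> 0" "real j \<ge> 0" by simp_all
    ultimately have "real i \<le> real ?n" "real j \<le> real ?n" by linarith+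
    then have "i \<le> ?n" "j \<le> ?n" by (simp_all only: of_nat_le_iff)
    then show "x \<in> (\<lambda>(i, j). real i + real j * \<theta>) ` ({..?n} \<times> {..?n})"
      using x by force
  qed
  then show ?thesis by (rule finite_subset) auto
qed

lemma strict_mono_floor_plus_index:
  fixes g :: "real \<Rightarrow> real"
  assumes "mono g" shows "strict_mono (\<lambda>k::nat. \<lfloor>g (real k)\<rfloor> + int k)"
proof (rule strict_monoI)
  fix k k' :: nat assume "k < k'"
  moreover have "\<lfloor>g (real k)\<rfloor> \<le> \<lfloor>g (real k')\<rfloor>"
    using \<open>k < k'\<close> by (intro floor_mono monoD[OF assms]) simp
  ultimately show "\<lfloor>g (real k)\<rfloor> + int k < \<lfloor>g (real k')\<rfloor> + int k'" by linarith
qed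

lemma The_strict_mono_preimage:
  fixes f :: "'a::{linorder,one} \<Rightarrow> 'b::linorder"
  assumes "strict_mono f" and "k \<ge> 1" and "K = f k"
  shows "(THE k. k \<ge> 1 \<and> K = f k) = k"
  using assms strict_mono_eq[of f] by (intro the_equality) auto

lemma irrational_mult_plus_nat_neq:
  assumes "\<theta> \<notin> \<rat>" and "m \<ge> 1"
  shows "real m * \<theta> + real m \<noteq> real n"
proof
  assume "real m * \<theta> + real m = real n"
  then have "\<theta> = (real n - real m) / real m" using assms(2) by (simp add: field_simps)
  then show False using assms(1) by (metis Rats_diff Rats_divide Rats_of_nat)
qed

text \<open>Beatty's theorem for the complementary sequences \<open>\<lfloor>k\<theta>\<rfloor> + k\<close> and \<open>\<lfloor>k/\<theta>\<rfloor> + k\<close>, in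
  the direction needed here: \<open>k = K - \<lfloor>K/(1+\<theta>)\<rfloor>\<close> witnesses the second kind.\<close>
lemma second_kind_if_not_first_kind:
  assumes "\<theta> \<notin> \<rat>" and "\<theta> > 0" and "K \<ge> 1" and "\<not> first_kind \<theta> K"
  shows "\<exists>k::nat. k \<ge> 1 \<and> int K = \<lfloor>real k / \<theta>\<rfloor> + int k"
proof -
  define f where "f = \<lfloor>real K / (1 + \<theta>)\<rfloor>"
  have f0: "f \<ge> 0" and fK: "f < int K"
    using assms(2,3) unfolding f_def by (simp, simp add: floor_less_iff pos_divide_less_eq)
  have f_le: "real_of_int f * (1 + \<theta>) \<le> real K" and f_gt: "real K < (real_of_int f + 1) * (1 + \<theta>)"
    using floor_divide_lower[of "1 + \<theta>" "real K"] floor_divide_upper[of "1 + \<theta>" "real K"] assms(2)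
    unfolding f_def by simp_all
  define m where "m = nat (f + 1)"
  have m1: "m \<ge> 1" and mr: "real m = real_of_int f + 1" using f0 unfolding m_def by simp_all
  have "int K \<noteq> \<lfloor>real m * \<theta>\<rfloor> + int m" using assms(4) m1 unfolding first_kind_def by blast
  moreover have "real K < real m * \<theta> + real m" using f_gt mr by (simp add: algebra_simps)
  ultimately have "real K + 1 \<le> real m * \<theta> + real m" by linarith
  moreover have "real m * \<theta> + real m \<noteq> real (K + 1)"
    by (rule irrational_mult_plus_nat_neq[OF assms(1) m1])
  ultimately have upper: "real K + 1 < real m * \<theta> + real m" by simp
  define k where "k = nat (int K - f)"
  have k1: "k \<ge> 1" and kr: "real k = real K - real_of_int f" using fK unfolding k_def by simp_all
  have "real_of_int f * \<theta> \<le> real k" "real k < (real_of_int f + 1) * \<theta>"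
    using f_le upper kr mr by (simp_all add: algebra_simps)
  then have "real_of_int f \<le> real k / \<theta>" "real k / \<theta> < real_of_int f + 1"
    using assms(2) by (simp_all add: pos_le_divide_eq pos_divide_less_eq)
  then have "\<lfloor>real k / \<theta>\<rfloor> = f" by linarith
  moreover have "int k = int K - f" using fK unfolding k_def by simp
  ultimately have "int K = \<lfloor>real k / \<theta>\<rfloor> + int k" by linarith
  then show ?thesis using k1 by blast
qed

lemma A_B_first_kind:
  assumes "first_kind \<theta> K" and "\<theta> > 0"
  obtains k :: nat where "int K = \<lfloor>real k * \<theta>\<rfloor> + int k"
    "real (A \<theta> K) = real_of_int \<lfloor>real k * \<theta>\<rfloor>" "B \<theta> K = k"
proof -
  obtain k :: nat where k: "k \<ge> 1" "int K = \<lfloor>real k * \<theta>\<rfloor> + int k"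
    using assms(1) unfolding first_kind_def by blast
  have "strict_mono (\<lambda>k::nat. \<lfloor>real k * \<theta>\<rfloor> + int k)"
    using strict_mono_floor_plus_index[of "\<lambda>x. x * \<theta>"] assms(2) by (simp add: mono_def)
  then have "k1 \<theta> K = k" unfolding k1_def using k by (rule The_strict_mono_preimage)
  moreover have "\<lfloor>real k * \<theta>\<rfloor> \<ge> 0" using assms(2) by simp
  ultimately show ?thesis using that k assms(1) by (simp add: A_def B_def)
qed

lemma A_B_second_kind:
  assumes "\<not> first_kind \<theta> K" and "\<theta> \<notin> \<rat>" and "\<theta> > 0" and "K \<ge> 1"
  obtains k :: nat where "int K = \<lfloor>real k / \<theta>\<rfloor> + int k"
    "A \<theta> K = k" "real (B \<theta> K) = real_of_int \<lfloor>real k / \<theta>\<rfloor>"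
proof -
  obtain k :: nat where k: "k \<ge> 1" "int K = \<lfloor>real k / \<theta>\<rfloor> + int k"
    using second_kind_if_not_first_kind[OF assms(2,3,4,1)] by blast
  have "strict_mono (\<lambda>k::nat. \<lfloor>real k / \<theta>\<rfloor> + int k)"
    using strict_mono_floor_plus_index[of "\<lambda>x. x / \<theta>"] assms(3)
    by (simp add: mono_def divide_right_mono)
  then have "k2 \<theta> K = k" unfolding k2_def using k by (rule The_strict_mono_preimage)
  moreover have "\<lfloor>real k / \<theta>\<rfloor> \<ge> 0" using assms(3) by simp
  ultimately show ?thesis using that k assms(1) by (simp add: A_def B_def)
qed

lemma of_nat_mem_Sth: "real i \<in> Sth \<theta>"
  unfolding mem_Sth_iff by (rule exI[of _ i], rule exI[of _ 0]) simp

lemma of_nat_mult_mem_Sth: "real j * \<theta> \<in> Sth \<theta>"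
  unfolding mem_Sth_iff by (rule exI[of _ 0], rule exI[of _ j]) simp

definition axis_point :: "real \<Rightarrow> real \<Rightarrow> bool" where
  "axis_point \<theta> p \<longleftrightarrow> (\<exists>n::nat. p = real n) \<or> (\<exists>m::nat. p = real m * \<theta>)"

text \<open>For \<open>x \<ge> 0\<close> this is the number of positive axis points \<open>n\<close> and \<open>m\<theta>\<close> up to \<open>x\<close>.\<close>
definition axis_count :: "real \<Rightarrow> real \<Rightarrow> int" where
  "axis_count \<theta> x = \<lfloor>x\<rfloor> + \<lfloor>x / \<theta>\<rfloor>"

lemma axis_count_mono: "\<theta> > 0 \<Longrightarrow> x \<le> y \<Longrightarrow> axis_count \<theta> x \<le> axis_count \<theta> y"
  unfolding axis_count_def by (intro add_mono floor_mono divide_right_mono) auto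

lemma axis_count_less_at_axis_point:
  assumes "\<theta> > 0" and "x < p" and "axis_point \<theta> p"
  shows "axis_count \<theta> x < axis_count \<theta> p"
proof -
  have "\<lfloor>x\<rfloor> \<le> \<lfloor>p\<rfloor>" "\<lfloor>x / \<theta>\<rfloor> \<le> \<lfloor>p / \<theta>\<rfloor>"
    using assms by (intro floor_mono divide_right_mono; simp)+
  moreover have "\<lfloor>x\<rfloor> < \<lfloor>p\<rfloor> \<or> \<lfloor>x / \<theta>\<rfloor> < \<lfloor>p / \<theta>\<rfloor>"
    using assms unfolding axis_point_def by (auto simp: floor_less_iff divide_less_eq)
  ultimately show ?thesis unfolding axis_count_def by linarith
qed

lemma axis_point_le_if_axis_count_le:
  assumes "\<theta> > 0" and "axis_point \<theta> p" and "axis_count \<theta> p \<le> axis_count \<theta> q"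
  shows "p \<le> q"
  using axis_count_less_at_axis_point[OF assms(1) _ assms(2), of q] assms(3) by linarith

lemma max_A_B_mem_N: "max (real (A \<theta> K)) (real (B \<theta> K) * \<theta>) \<in> N \<theta> K"
  unfolding N_def by (auto simp: max_def of_nat_mem_Sth of_nat_mult_mem_Sth)

lemma Max_N_eq:
  assumes "\<theta> > 1" shows "Max (N \<theta> K) = max (real (A \<theta> K)) (real (B \<theta> K) * \<theta>)"
proof (rule Max_eqI)
  show "finite (N \<theta> K)"
    by (rule finite_subset[OF _ finite_Sth_Int_atMost[OF assms]]) (auto simp: N_def)
  show "max (real (A \<theta> K)) (real (B \<theta> K) * \<theta>) \<in> N \<theta> K" by (rule max_A_B_mem_N)
qed (auto simp: N_def)

lemma Max_N_axis_point:
  assumes "\<theta> \<notin> \<rat>" and "\<theta> > 1" and "K \<ge> 1"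
  defines "P \<equiv> Max (N \<theta> K)"
  shows "axis_count \<theta> P = int K" and "axis_point \<theta> P"
    and "real i \<le> P \<Longrightarrow> i \<le> A \<theta> K" and "real j * \<theta> \<le> P \<Longrightarrow> j \<le> B \<theta> K"
proof -
  have \<theta>0: "\<theta> > 0" using assms(2) by simp
  have "axis_count \<theta> P = int K \<and> axis_point \<theta> P
    \<and> (real i \<le> P \<longrightarrow> i \<le> A \<theta> K) \<and> (real j * \<theta> \<le> P \<longrightarrow> j \<le> B \<theta> K)"
  proof (cases "first_kind \<theta> K")
    case True
    then obtain k :: nat where k: "int K = \<lfloor>real k * \<theta>\<rfloor> + int k"
      and A: "real (A \<theta> K) = real_of_int \<lfloor>real k * \<theta>\<rfloor>" and B: "B \<theta> K = k"
      using A_B_first_kind \<theta>0 by metis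
    have P: "P = real k * \<theta>" unfolding P_def Max_N_eq[OF assms(2)] A B by (simp add: max_def)
    have "real i \<le> real k * \<theta> \<Longrightarrow> real i \<le> real (A \<theta> K)"
      unfolding A by (metis le_floor_iff of_int_le_iff of_int_of_nat_eq)
    then show ?thesis unfolding P axis_count_def axis_point_def using k B \<theta>0 by auto
  next
    case False
    then obtain k :: nat where k: "int K = \<lfloor>real k / \<theta>\<rfloor> + int k"
      and A: "A \<theta> K = k" and B: "real (B \<theta> K) = real_of_int \<lfloor>real k / \<theta>\<rfloor>"
      using A_B_second_kind assms(1,3) \<theta>0 by metis
    have "real (B \<theta> K) * \<theta> \<le> real k" unfolding B using floor_divide_lower[OF \<theta>0] by blast
    then have P: "P = real k" unfolding P_def Max_N_eq[OF assms(2)] A by (simp add: max_def)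
    have "real j * \<theta> \<le> real k \<Longrightarrow> real j \<le> real (B \<theta> K)"
      unfolding B using \<theta>0 by (metis le_divide_eq le_floor_iff of_int_le_iff of_int_of_nat_eq)
    then show ?thesis unfolding P axis_count_def axis_point_def using k A by auto
  qed
  then show "axis_count \<theta> P = int K" "axis_point \<theta> P"
    "real i \<le> P \<Longrightarrow> i \<le> A \<theta> K" "real j * \<theta> \<le> P \<Longrightarrow> j \<le> B \<theta> K" by auto
qed

lemma Max_N_less_Max_N_Suc:
  assumes "\<theta> \<notin> \<rat>" and "\<theta> > 1" and "K \<ge> 1"
  shows "Max (N \<theta> K) < Max (N \<theta> (K + 1))"
  using Max_N_axis_point(1)[OF assms] Max_N_axis_point(1)[OF assms(1,2), of "K + 1"]
    axis_count_mono[of \<theta> "Max (N \<theta> (K + 1))" "Max (N \<theta> K)"] assms(2)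
  by (cases "Max (N \<theta> K) < Max (N \<theta> (K + 1))") auto

lemma Sth_below_Max_N_Suc:
  assumes "\<theta> \<notin> \<rat>" and "\<theta> > 1" and "K \<ge> 1"
    and "s \<in> Sth \<theta>" and "s < Max (N \<theta> (K + 1))"
  obtains i j :: nat where "s = real i + real j * \<theta>" "i \<le> A \<theta> K" "j \<le> B \<theta> K"
proof -
  let ?P = "Max (N \<theta> K)" and ?U = "Max (N \<theta> (K + 1))"
  have \<theta>0: "\<theta> > 0" using assms(2) by simp
  have le_P: "p \<le> ?P" if "axis_point \<theta> p" and "p \<le> s" for p
  proof (rule axis_point_le_if_axis_count_le[OF \<theta>0 \<open>axis_point \<theta> p\<close>])
    have "axis_count \<theta> p < axis_count \<theta> ?U"
      using that assms(5) Max_N_axis_point(2)[OF assms(1,2), of "K + 1"]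
      by (intro axis_count_less_at_axis_point[OF \<theta>0]) auto
    then show "axis_count \<theta> p \<le> axis_count \<theta> ?P"
      using Max_N_axis_point(1)[OF assms(1,2), of "K + 1"] Max_N_axis_point(1)[OF assms(1-3)]
      by simp
  qed
  obtain i j :: nat where s: "s = real i + real j * \<theta>" using assms(4) mem_Sth_iff by blast
  have "real i \<le> ?P" "real j * \<theta> \<le> ?P"
    using s \<theta>0 by (auto intro!: le_P simp: axis_point_def)
  then show ?thesis
    using that s Max_N_axis_point(3,4)[OF assms(1-3)] by blast
qed

definition window :: "real \<Rightarrow> nat \<Rightarrow> real set" where
  "window \<theta> K = Sth \<theta> \<inter>
     {real (A \<theta> K) + real (B \<theta> K) * \<theta> - Max (N \<theta> (K + 1)) <..< Max (N \<theta> (K + 1))}"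

lemma finite_window: "\<theta> > 1 \<Longrightarrow> finite (window \<theta> K)"
  unfolding window_def
  by (rule finite_subset[OF _ finite_Sth_Int_atMost[of \<theta> "Max (N \<theta> (K + 1))"]]) auto

lemma reflect_mem_window:
  assumes "\<theta> \<notin> \<rat>" and "\<theta> > 1" and "K \<ge> 1" and "s \<in> window \<theta> K"
  shows "real (A \<theta> K) + real (B \<theta> K) * \<theta> - s \<in> window \<theta> K"
proof -
  obtain i j :: nat where ij: "s = real i + real j * \<theta>" "i \<le> A \<theta> K" "j \<le> B \<theta> K"
    using Sth_below_Max_N_Suc[OF assms(1-3)] assms(4) unfolding window_def by auto
  then have "real (A \<theta> K) + real (B \<theta> K) * \<theta> - s = real (A \<theta> K - i) + real (B \<theta> K - j) * \<theta>"
    by (simp add: algebra_simps)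
  then have "real (A \<theta> K) + real (B \<theta> K) * \<theta> - s \<in> Sth \<theta>" unfolding mem_Sth_iff by blast
  then show ?thesis using assms(4) unfolding window_def by auto
qed

lemma C_eq_window:
  assumes "\<theta> \<notin> \<rat>" and "\<theta> > 1" and "K \<ge> 1"
  shows "C \<theta> K = window \<theta> K"
proof -
  define c where "c = real (A \<theta> K) + real (B \<theta> K) * \<theta>"
  define P where "P = max (real (A \<theta> K)) (real (B \<theta> K) * \<theta>)"
  define Q where "Q = min (real (A \<theta> K)) (real (B \<theta> K) * \<theta>)"
  define U where "U = Max (N \<theta> (K + 1))"
  have P: "Max (N \<theta> K) = P" unfolding P_def by (rule Max_N_eq[OF assms(2)])
  have N: "N \<theta> K = Sth \<theta> \<inter> {Q..P}" unfolding N_def P_def Q_def by auto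
  have T: "T \<theta> K = Sth \<theta> \<inter> {P..<U}" unfolding T_def P U_def by auto
  have T': "T' \<theta> K = (\<lambda>s. c - s) ` T \<theta> K" unfolding T'_def c_def ..
  have W: "window \<theta> K = Sth \<theta> \<inter> {c - U<..<U}" unfolding window_def c_def U_def ..
  have c: "c = Q + P" and "Q \<le> P" unfolding c_def P_def Q_def by auto
  moreover have "P < U" unfolding P[symmetric] U_def by (rule Max_N_less_Max_N_Suc[OF assms])
  ultimately have NT_sub: "N \<theta> K \<union> T \<theta> K \<subseteq> window \<theta> K" unfolding N T W by auto
  moreover have "T' \<theta> K \<subseteq> window \<theta> K"
    using NT_sub reflect_mem_window[OF assms] unfolding T' c_def by auto
  moreover have "x \<in> C \<theta> K" if x: "x \<in> window \<theta> K" for x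
  proof -
    consider "P \<le> x" | "Q \<le> x" "x < P" | "x < Q" by linarith
    then show ?thesis
    proof cases
      case 3
      have "c - x \<in> window \<theta> K" using reflect_mem_window[OF assms x] unfolding c_def .
      then have "c - x \<in> T \<theta> K" using 3 c x unfolding T W by auto
      then have "c - (c - x) \<in> T' \<theta> K" unfolding T' by blast
      then show ?thesis unfolding C_def by simp
    qed (use x in \<open>auto simp: C_def N T W\<close>)
  qed
  ultimately show ?thesis unfolding C_def by blast
qed

lemma Int_greaterThanLessThan_eq_Int_Min_Max:
  fixes S :: "'a::linorder set"
  assumes "finite (S \<inter> {a<..<b})" and "S \<inter> {a<..<b} \<noteq> {}"
  shows "S \<inter> {a<..<b} = S \<inter> {Min (S \<inter> {a<..<b}) .. Max (S \<inter> {a<..<b})}"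
proof -
  have "Min (S \<inter> {a<..<b}) \<in> {a<..<b}" "Max (S \<inter> {a<..<b}) \<in> {a<..<b}"
    using Min_in[OF assms] Max_in[OF assms] by auto
  then show ?thesis using assms(1) by fastforce
qed

lemma rev_map_reflect_sorted_list_of_set:
  fixes X :: "'a::linordered_ab_group_add set"
  assumes "finite X" and "\<forall>x\<in>X. c - x \<in> X"
  shows "rev (map (\<lambda>x. c - x) (sorted_list_of_set X)) = sorted_list_of_set X"
proof (rule sorted_distinct_set_unique)
  let ?xs = "sorted_list_of_set X"
  have "(\<lambda>x. c - x) ` X = X"
    using assms(2) by (auto intro!: image_eqI[where x = "c - x" for x])
  then show "set (rev (map (\<lambda>x. c - x) ?xs)) = set ?xs" using assms(1) by simp
  show "sorted (rev (map (\<lambda>x. c - x) ?xs))"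
    unfolding sorted_wrt_rev sorted_wrt_map using sorted_sorted_list_of_set[of X]
    by (auto elim: sorted_wrt_mono_rel[rotated])
  show "distinct (rev (map (\<lambda>x. c - x) ?xs))" by (simp add: distinct_map inj_on_def)
qed auto

lemma length_diffs: "length (diffs xs) = length xs - 1"
  unfolding diffs_def by simp

lemma nth_diffs: "i < length xs - 1 \<Longrightarrow> diffs xs ! i = xs ! (i + 1) - xs ! i"
  unfolding diffs_def by simp

lemma rev_diffs_if_rev_map_reflect:
  assumes "rev (map (\<lambda>x. c - x) xs) = xs"
  shows "rev (diffs xs) = diffs xs"
proof (rule nth_equalityI)
  let ?n = "length xs"
  have xs_nth: "xs ! i = c - xs ! (?n - 1 - i)" if "i < ?n" for i
    using arg_cong[OF assms, of "\<lambda>ys. ys ! i"] that by (simp add: rev_nth)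
  show "length (rev (diffs xs)) = length (diffs xs)" by simp
  fix i assume "i < length (rev (diffs xs))"
  then have i: "i < ?n - 1" by (simp add: length_diffs)
  then have "rev (diffs xs) ! i = diffs xs ! (?n - 2 - i)"
    by (simp add: rev_nth length_diffs numeral_2_eq_2)
  also have "\<dots> = xs ! (?n - 1 - i) - xs ! (?n - 2 - i)"
    using i by (simp add: nth_diffs numeral_2_eq_2 Suc_diff_Suc)
  also have "\<dots> = (c - xs ! i) - (c - xs ! (i + 1))"
    using xs_nth[of i] xs_nth[of "i + 1"] i by (simp add: numeral_2_eq_2 Suc_diff_Suc)
  also have "\<dots> = diffs xs ! i" using i by (simp add: nth_diffs)
  finally show "rev (diffs xs) ! i = diffs xs ! i" .
qed

theorem lemma10:
  fixes \<theta> :: real and K :: nat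
  assumes "\<theta> \<notin> \<rat>" and "1 < \<theta>" and "\<theta> < 2" and "K \<ge> 1"
  shows "T' \<theta> K \<subseteq> Sth \<theta>
    \<and> finite (C \<theta> K)
    \<and> C \<theta> K = Sth \<theta> \<inter> {Min (C \<theta> K) .. Max (C \<theta> K)}
    \<and> (\<forall>s \<in> C \<theta> K. real (A \<theta> K) + real (B \<theta> K) * \<theta> - s \<in> C \<theta> K)
    \<and> rev (diffs (sorted_list_of_set (C \<theta> K))) = diffs (sorted_list_of_set (C \<theta> K))"
proof -
  note window = C_eq_window[OF assms(1,2,4)]
  have fin: "finite (C \<theta> K)" unfolding window by (rule finite_window[OF assms(2)])
  have nonempty: "C \<theta> K \<noteq> {}" using max_A_B_mem_N unfolding C_def by blast
  have reflect: "\<forall>s \<in> C \<theta> K. real (A \<theta> K) + real (B \<theta> K) * \<theta> - s \<in> C \<theta> K"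
    unfolding window using reflect_mem_window[OF assms(1,2,4)] by blast
  have "T' \<theta> K \<subseteq> Sth \<theta>" using window unfolding C_def window_def by blast
  moreover have "C \<theta> K = Sth \<theta> \<inter> {Min (C \<theta> K) .. Max (C \<theta> K)}"
    using fin nonempty unfolding window window_def by (rule Int_greaterThanLessThan_eq_Int_Min_Max)
  moreover have "rev (diffs (sorted_list_of_set (C \<theta> K))) = diffs (sorted_list_of_set (C \<theta> K))"
    by (rule rev_diffs_if_rev_map_reflect[OF rev_map_reflect_sorted_list_of_set[OF fin reflect]])
  ultimately show ?thesis using fin reflect by blast
qed

end
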